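(* Let $p$ be a number of predicate symbols and let $M$ be a set of $m$ metarules, each in the fragment $\mathcal{M}^i_j$ and each containing, in addition to the (at most $j+1$) existentially quantified higher-order variables occurring in predicate positions of its literals, at most $k$ additional existentially quantified higher-order variables (occurring as arguments of literals). Then the number of (abstracted) programs expressible with $n$ clauses, where each clause is obtained from some metarule in $M$ by substituting each existentially quantified higher-order variable with one of the $p$ predicate symbols, is at most $(m\,p^{j+1+k})^n$.
   Context: A metarule is a higher-order formula of the form $\exists \pi \forall \mu\; l_0 \leftarrow l_1,\dots,l_r$, where each $l_t$ is a literal, $\pi$ and $\mu$ are disjoint sets of variables, each variable being first-order (can be bound to a constant symbol) or higher-order (can be bound to a predicate symbol). An example is $P(A,B) \leftarrow Q(A,B,R)$ with $P,Q,R$ existentially quantified higher-order variables and $A,B$ universally quantified first-order variables; here $R$ is an existentially quantified higher-order variable occurring as an argument. A metarule is in the fragment $\mathcal{M}^i_j$ if it has at most $j$ literals in the body and each literal has arity at most $i$. A clause is obtained from a metarule $M_0$ as $M_0\theta$, where $\theta$ is a substitution grounding all the existentially quantified variables of $M_0$ (here, mapping each existentially quantified higher-order variable to one of the $p$ available predicate symbols). A program with $n$ clauses is a selection of $n$ such clauses. *)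

theory Defs
  imports Main
begin

datatype 'a lit = Lit (lpred: 'a) (largs: "'a list")

text \<open>A metarule: head literal, body literals, the set of existentially quantified
  variables (pi), and the set of higher-order variables. All other variables occurring
  in the metarule are universally quantified (mu).\<close>

datatype 'v metarule = Metarule
  (mhead: "'v lit") (mbody: "'v lit list") (mex: "'v set") (mho: "'v set")

definition mlits :: "'v metarule \<Rightarrow> 'v lit list" where
  "mlits M = mhead M # mbody M"

definition lit_vars :: "'a lit \<Rightarrow> 'a set" where
  "lit_vars l = insert (lpred l) (set (largs l))"

definition mvars :: "'v metarule \<Rightarrow> 'v set" where
  "mvars M = (\<Union>l\<in>set (mlits M). lit_vars l)"

definition mpredvars :: "'v metarule \<Rightarrow> 'v set" where
  "mpredvars M = lpred ` set (mlits M)"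

definition ex_ho :: "'v metarule \<Rightarrow> 'v set" where
  "ex_ho M = mex M \<inter> mho M"

definition wf_metarule :: "'v metarule \<Rightarrow> bool" where
  "wf_metarule M \<longleftrightarrow> mex M \<subseteq> mvars M"

definition in_fragment :: "nat \<Rightarrow> nat \<Rightarrow> 'v metarule \<Rightarrow> bool" where
  "in_fragment i j M \<longleftrightarrow> length (mbody M) \<le> j \<and> (\<forall>l\<in>set (mlits M). length (largs l) \<le> i)"

text \<open>Symbols of a clause: either a remaining (universally quantified) variable or a predicate symbol.\<close>
datatype ('v, 'c) sym = V 'v | C 'c

type_synonym ('v, 'c) clause = "('v, 'c) sym lit \<times> ('v, 'c) sym lit list"

definition inst_sym :: "'v set \<Rightarrow> ('v \<Rightarrow> 'c) \<Rightarrow> 'v \<Rightarrow> ('v, 'c) sym" where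
  "inst_sym E \<theta> x = (if x \<in> E then C (\<theta> x) else V x)"

definition inst_lit :: "'v set \<Rightarrow> ('v \<Rightarrow> 'c) \<Rightarrow> 'v lit \<Rightarrow> ('v, 'c) sym lit" where
  "inst_lit E \<theta> l = map_lit (inst_sym E \<theta>) l"

definition inst_metarule :: "('v \<Rightarrow> 'c) \<Rightarrow> 'v metarule \<Rightarrow> ('v, 'c) clause" where
  "inst_metarule \<theta> M =
     (inst_lit (ex_ho M) \<theta> (mhead M), map (inst_lit (ex_ho M) \<theta>) (mbody M))"

definition clauses_of :: "'c set \<Rightarrow> 'v metarule \<Rightarrow> ('v, 'c) clause set" where
  "clauses_of Ps M = {inst_metarule \<theta> M | \<theta>. \<forall>x\<in>ex_ho M. \<theta> x \<in> Ps}"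

definition programs :: "'c set \<Rightarrow> 'v metarule set \<Rightarrow> nat \<Rightarrow> ('v, 'c) clause set set" where
  "programs Ps Ms n = {Prog. Prog \<subseteq> (\<Union>M\<in>Ms. clauses_of Ps M) \<and> card Prog = n}"

end

theory Submission
  imports Defs "HOL-Library.FuncSet"
begin

text \<open>A clause obtained from a metarule M is determined by M together with the symbols
  assigned to its existentially quantified higher-order variables. These are the at most j + 1
  variables in predicate position of its at most j + 1 literals plus at most k further ones, so M
  yields at most p^(j+1+k) clauses and all m metarules together at most m p^(j+1+k). A program
  with n clauses is an n-element subset of these, and a set of size N has at most N^n subsets of
  size n.\<close>

lemma card_subsets_of_card_le_pow:
  assumes "finite U"
  shows "card {B. B \<subseteq> U \<and> card B = n} \<le> card U ^ n"
proof (cases "n \<le> card U")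
  case True
  then show ?thesis using assms by (simp add: n_subsets binomial_le_pow)
next
  case False
  then show ?thesis using assms by (simp add: n_subsets binomial_eq_0)
qed

lemma finite_mvars: "finite (mvars M)"
  unfolding mvars_def lit_vars_def by auto

lemma finite_ex_ho: "wf_metarule M \<Longrightarrow> finite (ex_ho M)"
  using finite_mvars unfolding wf_metarule_def ex_ho_def by (meson finite_Int finite_subset)

lemma card_mpredvars_le: "card (mpredvars M) \<le> length (mbody M) + 1"
proof -
  have "card (mpredvars M) \<le> card (set (mlits M))"
    unfolding mpredvars_def by (rule card_image_le) simp
  also have "\<dots> \<le> length (mlits M)" by (rule card_length)
  finally show ?thesis by (simp add: mlits_def)
qed

lemma card_ex_ho_le:
  assumes "wf_metarule M" and "in_fragment i j M" and "card (ex_ho M - mpredvars M) \<le> k"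
  shows "card (ex_ho M) \<le> j + 1 + k"
proof -
  have "card (ex_ho M) \<le> card (mpredvars M \<union> (ex_ho M - mpredvars M))"
    using finite_ex_ho[OF assms(1)] by (intro card_mono) (auto simp: mpredvars_def)
  also have "\<dots> \<le> card (mpredvars M) + card (ex_ho M - mpredvars M)" by (rule card_Un_le)
  also have "\<dots> \<le> (length (mbody M) + 1) + k" using card_mpredvars_le assms(3) by (rule add_mono)
  finally show ?thesis using assms(2) unfolding in_fragment_def by linarith
qed

lemma inst_metarule_restrict: "inst_metarule (restrict \<theta> (ex_ho M)) M = inst_metarule \<theta> M"
proof -
  have "inst_sym (ex_ho M) (restrict \<theta> (ex_ho M)) = inst_sym (ex_ho M) \<theta>"
    by (rule ext) (simp add: inst_sym_def)
  then show ?thesis unfolding inst_metarule_def inst_lit_def by simp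
qed

lemma clauses_of_subset_image_PiE:
  "clauses_of Ps M \<subseteq> (\<lambda>\<theta>. inst_metarule \<theta> M) ` (ex_ho M \<rightarrow>\<^sub>E Ps)"
proof
  fix c assume "c \<in> clauses_of Ps M"
  then obtain \<theta> where c: "c = inst_metarule \<theta> M" and \<theta>: "\<forall>x\<in>ex_ho M. \<theta> x \<in> Ps"
    unfolding clauses_of_def by blast
  have "restrict \<theta> (ex_ho M) \<in> ex_ho M \<rightarrow>\<^sub>E Ps" using \<theta> by auto
  then show "c \<in> (\<lambda>\<theta>. inst_metarule \<theta> M) ` (ex_ho M \<rightarrow>\<^sub>E Ps)"
    unfolding c by (metis inst_metarule_restrict image_eqI)
qed

lemma
  assumes "finite Ps" and "wf_metarule M"
  shows finite_clauses_of: "finite (clauses_of Ps M)"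
    and card_clauses_of_le: "card (clauses_of Ps M) \<le> card Ps ^ card (ex_ho M)"
proof -
  have fin: "finite (ex_ho M \<rightarrow>\<^sub>E Ps)"
    using assms finite_ex_ho by (intro finite_PiE) auto
  then show "finite (clauses_of Ps M)"
    using clauses_of_subset_image_PiE by (rule finite_surj)
  have "card (clauses_of Ps M) \<le> card (ex_ho M \<rightarrow>\<^sub>E Ps)"
    using fin clauses_of_subset_image_PiE by (rule surj_card_le)
  also have "\<dots> = card Ps ^ card (ex_ho M)"
    using assms finite_ex_ho[OF assms(2)] by (simp add: card_PiE)
  finally show "card (clauses_of Ps M) \<le> card Ps ^ card (ex_ho M)" .
qed

theorem proposition2:
  fixes Ps :: "'c set" and Ms :: "'v metarule set" and p m i j k n :: nat
  assumes "finite Ps" and "card Ps = p" and "Ps \<noteq> {}"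
    and "finite Ms" and "card Ms = m"
    and "\<forall>M\<in>Ms. wf_metarule M"
    and "\<forall>M\<in>Ms. in_fragment i j M"
    and "\<forall>M\<in>Ms. mpredvars M \<subseteq> mho M"
    and "\<forall>M\<in>Ms. card (ex_ho M - mpredvars M) \<le> k"
  shows "card (programs Ps Ms n) \<le> (m * p ^ (j + 1 + k)) ^ n"
proof -
  define U where "U = (\<Union>M\<in>Ms. clauses_of Ps M)"
  have "p > 0" using assms(1-3) by auto
  have clauses_le: "card (clauses_of Ps M) \<le> p ^ (j + 1 + k)" if "M \<in> Ms" for M
    using card_clauses_of_le[of Ps M] power_increasing[OF card_ex_ho_le, of M i j k p]
      assms that \<open>p > 0\<close> by fastforce
  have "finite U" unfolding U_def using assms(1,4,6) by (auto intro: finite_clauses_of)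
  have "card U \<le> (\<Sum>M\<in>Ms. card (clauses_of Ps M))" unfolding U_def using assms(4) by (rule card_UN_le)
  also have "\<dots> \<le> m * p ^ (j + 1 + k)" using sum_bounded_above[of Ms, OF clauses_le] assms(5) by simp
  finally have card_U: "card U \<le> m * p ^ (j + 1 + k)" .
  have "card (programs Ps Ms n) \<le> card U ^ n"
    unfolding programs_def U_def[symmetric] using \<open>finite U\<close> by (rule card_subsets_of_card_le_pow)
  also have "\<dots> \<le> (m * p ^ (j + 1 + k)) ^ n" using card_U by (rule power_mono) simp
  finally show ?thesis .
qed

end
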